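(* Let $E$ be a finite extension of $\mathbf Q_p$ with ring of integers $O_E$. Let $\chi_{y,A}:A\to E$ be an ordinary character with values $(y_1,y_2,y_3)$ at $(Y_1,Y_2,Y_3)$. For $w\in\mathcal S_3$, define numbers $q(w,y)$ as follows: - $q(1,y)=1$; - $q(s_1,y)=1$ if $y_2^{-1}\in O_E$, and $q(s_1,y)=y_2^{-1}$ if $y_2\in O_E$; - $q(s_2,y)=y_2$ if $y_2^{-1}\in O_E$, and $q(s_2,y)=1$ if $y_2\in O_E$; - $q(s_1s_2,y)=q^{-1}y_1y_2$; - $q(s_2s_1,y)=q^{-1}y_1$; - $q(s_1s_2s_1,y)=q^{-1}y_1y_2$ if $y_2^{-1}\in O_E$, and $q(s_1s_2s_1,y)=q^{-1}y_1$ if $y_2\in O_E$. When $y_2$ is a unit, either of the two prescribed values may be used, consistently across $s_1,s_2,s_1s_2s_1$. Let $\Phi=1\otimes1$ be the canonical generator of $I_A(\chi_{y,A})$, and let $L(\chi_{y,A})$ be the $O_E$-submodule of $I_A(\chi_{y,A})$ that is free with basis $\{q(w,y)T_w\Phi\}_{w\in\mathcal S_3}$. Then $L(\chi_{y,A})=H_{O_E}\Phi$. In particular, $L(\chi_{y,A})$ is stable under $H_{O_E}$ and is an $O_E$-integral structure of $I_A(\chi_{y,A})$ (the canonical one).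
   Context: Let $q$ be a power of $p$, namely the residue cardinality of a non-archimedean local field $F$. Let $H$ be the $\mathbf Z[q]$-algebra ($q$ an indeterminate) generated by $T^{\pm1},S_1$ with relations $$(S_1+1)(S_1-q)=0,\quad T^3S_1=S_1T^3,\quad S_1S_2S_1=S_2S_1S_2,\quad TS_2=S_1T.$$ For a commutative ring $R$ with a map $\mathbf Z[q]\to R$, set $H_R=H\otimes_{\mathbf Z[q]}R$; for $R=E$ or $O_E$, the indeterminate $q$ is sent to the integer $q$. In $H\otimes\mathbf Z[q^{\pm1}]$, the elements $S_i$ are invertible, and one puts $$Y_1=qS_1^{-1}S_2^{-1}T,\qquad Y_2=S_2^{-1}TS_1,\qquad Y_3=q^{-1}TS_1S_2.$$ Let $A$ be the commutative subalgebra generated over $\mathbf Z[q^{\pm1}]$ by $Y_i^{\pm1}$; it is a Laurent polynomial algebra in the $Y_i$. A character $\chi:A\to E$ is a ring morphism sending $q$ to $q$, and it is determined by its values $(y_1,y_2,y_3)$. The standard module is $I_A(\chi)=H_E\otimes_{A,\chi}E$; it is 6-dimensional, and its canonical generator is $\Phi=1\otimes1$. The character $\chi$ is called ordinary if $\chi(A\cap H)\subset O_E$ (equivalently, $(y_1y_2y_3)^{\pm1}$, $q(y_iy_j)^{\pm1}$ and $qy_i^{\pm1}$ lie in $O_E$ for $i\neq j$) and moreover $y_1\in O_E$ and $y_3^{-1}\in O_E$. $\mathcal S_3$ is the Coxeter group with generators $s_1,s_2$ and length function $\ell$. One sets $T_{s_i}=S_i$ and $T_{ww'}=T_wT_{w'}$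 whenever $\ell(ww')=\ell(w)+\ell(w')$. An $O_E$-integral structure of a finite-dimensional $H_E$-module $M$ is a free $O_E$-submodule which is $H_{O_E}$-stable and contains an $E$-basis of $M$. *)

theory Defs
  imports Main HOL.Vector_Spaces "HOL-Computational_Algebra.Primes"
begin

text \<open>A finite extension of Q_p is (up to isomorphism) the same thing as a field of
characteristic 0, complete with respect to a discrete valuation, whose residue field is
finite of characteristic p.  The valuation v is normalised (surjective onto the integers);
its value at 0 is irrelevant (0 is treated separately).\<close>

definition p_adic_local_field :: "('e::field_char_0 \<Rightarrow> int) \<Rightarrow> nat \<Rightarrow> bool" where
  "p_adic_local_field v p \<longleftrightarrow>
     prime p \<and>
     (\<forall>x y. x \<noteq> 0 \<longrightarrow> y \<noteq> 0 \<longrightarrow> v (x * y) = v x + v y) \<and>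
     (\<forall>x y. x \<noteq> 0 \<longrightarrow> y \<noteq> 0 \<longrightarrow> x + y \<noteq> 0 \<longrightarrow> v (x + y) \<ge> min (v x) (v y)) \<and>
     (\<exists>\<pi>. \<pi> \<noteq> 0 \<and> v \<pi> = 1) \<and>
     v (of_nat p) > 0 \<and>
     (\<exists>R. finite R \<and> (\<forall>x. (x = 0 \<or> v x \<ge> 0) \<longrightarrow> (\<exists>r\<in>R. x = r \<or> v (x - r) > 0))) \<and>
     (\<forall>s :: nat \<Rightarrow> 'e.
        (\<forall>N::int. \<exists>M. \<forall>m\<ge>M. \<forall>n\<ge>M. s m = s n \<or> v (s m - s n) \<ge> N) \<longrightarrow>
        (\<exists>l. \<forall>N::int. \<exists>M. \<forall>n\<ge>M. s n = l \<or> v (s n - l) \<ge> N))"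

definition ring_of_integers :: "('e::field \<Rightarrow> int) \<Rightarrow> 'e set" where
  "ring_of_integers v = {x. x = 0 \<or> v x \<ge> 0}"

datatype s3 = W1 | Ws1 | Ws2 | Ws1s2 | Ws2s1 | Ws1s2s1

lemma UNIV_s3: "(UNIV :: s3 set) = {W1, Ws1, Ws2, Ws1s2, Ws2s1, Ws1s2s1}"
  using s3.exhaust by auto

instance s3 :: finite
  by standard (simp add: UNIV_s3)

text \<open>An H_E-module is an E-vector space with operators S1, T, Ti (= T^{-1}).
S2 is determined by T S2 = S1 T.\<close>

definition hS2 :: "('m \<Rightarrow> 'm) \<Rightarrow> ('m \<Rightarrow> 'm) \<Rightarrow> ('m \<Rightarrow> 'm) \<Rightarrow> 'm \<Rightarrow> 'm" where
  "hS2 S1 T Ti x = Ti (S1 (T x))"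

text \<open>Inverse of S_i, using S^2 = (q-1) S + q, i.e. S^{-1} = q^{-1}(S - (q-1)).\<close>
definition hSinv :: "('e::field \<Rightarrow> 'm::ab_group_add \<Rightarrow> 'm) \<Rightarrow> 'e \<Rightarrow> ('m \<Rightarrow> 'm) \<Rightarrow> 'm \<Rightarrow> 'm" where
  "hSinv scale q S x = scale (inverse q) (S x - scale (q - 1) x)"

definition hY1 where
  "hY1 scale q S1 T Ti x = scale q (hSinv scale q S1 (hSinv scale q (hS2 S1 T Ti) (T x)))"
definition hY2 where
  "hY2 scale q S1 T Ti x = hSinv scale q (hS2 S1 T Ti) (T (S1 x))"
definition hY3 where
  "hY3 scale q S1 T Ti x = scale (inverse q) (T (S1 (hS2 S1 T Ti x)))"

definition hecke_module ::
  "('e::field \<Rightarrow> 'm::ab_group_add \<Rightarrow> 'm) \<Rightarrow> 'e \<Rightarrow> ('m \<Rightarrow> 'm) \<Rightarrow> ('m \<Rightarrow> 'm) \<Rightarrow> ('m \<Rightarrow> 'm) \<Rightarrow> bool" where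
  "hecke_module scale q S1 T Ti \<longleftrightarrow>
     vector_space scale \<and>
     module_hom scale scale S1 \<and>
     module_hom scale scale T \<and>
     module_hom scale scale Ti \<and>
     (\<forall>x. T (Ti x) = x) \<and> (\<forall>x. Ti (T x) = x) \<and>
     (\<forall>x. S1 (S1 x) = scale (q - 1) (S1 x) + scale q x) \<and>
     (\<forall>x. T (T (T (S1 x))) = S1 (T (T (T x)))) \<and>
     (\<forall>x. S1 (hS2 S1 T Ti (S1 x)) = hS2 S1 T Ti (S1 (hS2 S1 T Ti x)))"

fun hTw :: "('m \<Rightarrow> 'm) \<Rightarrow> ('m \<Rightarrow> 'm) \<Rightarrow> ('m \<Rightarrow> 'm) \<Rightarrow> s3 \<Rightarrow> 'm \<Rightarrow> 'm" where
  "hTw S1 T Ti W1 x = x"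
| "hTw S1 T Ti Ws1 x = S1 x"
| "hTw S1 T Ti Ws2 x = hS2 S1 T Ti x"
| "hTw S1 T Ti Ws1s2 x = S1 (hS2 S1 T Ti x)"
| "hTw S1 T Ti Ws2s1 x = hS2 S1 T Ti (S1 x)"
| "hTw S1 T Ti Ws1s2s1 x = S1 (hS2 S1 T Ti (S1 x))"

inductive_set orbit_vecs :: "('m \<Rightarrow> 'm) \<Rightarrow> ('m \<Rightarrow> 'm) \<Rightarrow> ('m \<Rightarrow> 'm) \<Rightarrow> 'm \<Rightarrow> 'm set"
  for S1 T Ti \<Phi> where
  base: "\<Phi> \<in> orbit_vecs S1 T Ti \<Phi>"
| stepS: "x \<in> orbit_vecs S1 T Ti \<Phi> \<Longrightarrow> S1 x \<in> orbit_vecs S1 T Ti \<Phi>"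
| stepT: "x \<in> orbit_vecs S1 T Ti \<Phi> \<Longrightarrow> T x \<in> orbit_vecs S1 T Ti \<Phi>"
| stepTi: "x \<in> orbit_vecs S1 T Ti \<Phi> \<Longrightarrow> Ti x \<in> orbit_vecs S1 T Ti \<Phi>"

inductive_set O_span :: "('e \<Rightarrow> 'm::ab_group_add \<Rightarrow> 'm) \<Rightarrow> 'e set \<Rightarrow> 'm set \<Rightarrow> 'm set"
  for scale OE X where
  zero: "0 \<in> O_span scale OE X"
| smul: "a \<in> OE \<Longrightarrow> x \<in> X \<Longrightarrow> scale a x \<in> O_span scale OE X"
| add: "x \<in> O_span scale OE X \<Longrightarrow> y \<in> O_span scale OE X \<Longrightarrow> x + y \<in> O_span scale OE X"

text \<open>H_{O_E} Phi: the image of H_{O_E} applied to Phi, i.e. the O_E-span of all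
monomials in T^{\<plusminus>1}, S1 applied to Phi.\<close>
definition HO_Phi where
  "HO_Phi scale OE S1 T Ti \<Phi> = O_span scale OE (orbit_vecs S1 T Ti \<Phi>)"

text \<open>The numbers q(w,y).  The flag b selects the branch: b = True means the
branch "y2^{-1} in O_E", b = False the branch "y2 in O_E".\<close>
fun qwy :: "bool \<Rightarrow> 'e::field \<Rightarrow> 'e \<Rightarrow> 'e \<Rightarrow> s3 \<Rightarrow> 'e" where
  "qwy b q y1 y2 W1 = 1"
| "qwy b q y1 y2 Ws1 = (if b then 1 else inverse y2)"
| "qwy b q y1 y2 Ws2 = (if b then y2 else 1)"
| "qwy b q y1 y2 Ws1s2 = inverse q * y1 * y2"
| "qwy b q y1 y2 Ws2s1 = inverse q * y1"
| "qwy b q y1 y2 Ws1s2s1 = (if b then inverse q * y1 * y2 else inverse q * y1)"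

definition L_lattice where
  "L_lattice scale OE b q y1 y2 S1 T Ti \<Phi> =
     {(\<Sum>w\<in>UNIV. scale (c w * qwy b q y1 y2 w) (hTw S1 T Ti w \<Phi>)) | c. \<forall>w. c w \<in> OE}"

definition ordinary :: "'e::field set \<Rightarrow> 'e \<Rightarrow> 'e \<Rightarrow> 'e \<Rightarrow> 'e \<Rightarrow> bool" where
  "ordinary OE q y1 y2 y3 \<longleftrightarrow>
     y1 * y2 * y3 \<in> OE \<and> inverse (y1 * y2 * y3) \<in> OE \<and>
     q * (y1 * y2) \<in> OE \<and> q * inverse (y1 * y2) \<in> OE \<and>
     q * (y1 * y3) \<in> OE \<and> q * inverse (y1 * y3) \<in> OE \<and>
     q * (y2 * y3) \<in> OE \<and> q * inverse (y2 * y3) \<in> OE \<and>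
     q * y1 \<in> OE \<and> q * inverse y1 \<in> OE \<and>
     q * y2 \<in> OE \<and> q * inverse y2 \<in> OE \<and>
     q * y3 \<in> OE \<and> q * inverse y3 \<in> OE \<and>
     y1 \<in> OE \<and> inverse y3 \<in> OE"

end

theory Submission
  imports Defs
begin

(* The vectors T_w Phi form a basis of the standard module, and the eigenvalue equations for
   Y1, Y2, Y3 show that T acts monomially on it: T (T_w Phi) is a multiple of T_{w'} Phi, where
   w \<mapsto> w' permutes S_3 in two 3-cycles, while S1 acts by the usual Hecke rule.  With the weights
   q(w,y), T sends each generator q(w,y) T_w Phi of L to a unit (1 or y1 y2 y3) times another
   generator, and ordinarity together with the choice of branch makes every coefficient of
   S1 (q(w,y) T_w Phi) integral.  So L is an H_{O_E}-stable lattice containing Phi, hence it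
   contains H_{O_E} Phi.  Conversely, one generator of each T-cycle is Phi or S1 applied to a
   generator already obtained, and T moves along the cycles, so every generator lies in H_{O_E} Phi. *)

locale subring_module = module scale for scale :: "'a::comm_ring_1 \<Rightarrow> 'b::ab_group_add \<Rightarrow> 'b" +
  fixes R :: "'a set"
  assumes one_mem: "1 \<in> R"
    and add_mem: "a \<in> R \<Longrightarrow> b \<in> R \<Longrightarrow> a + b \<in> R"
    and mult_mem: "a \<in> R \<Longrightarrow> b \<in> R \<Longrightarrow> a * b \<in> R"
    and uminus_mem: "a \<in> R \<Longrightarrow> - a \<in> R"
begin

lemma zero_mem: "0 \<in> R"
  using add_mem[OF one_mem uminus_mem[OF one_mem]] by simp

lemma diff_mem: "a \<in> R \<Longrightarrow> b \<in> R \<Longrightarrow> a - b \<in> R"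
  using add_mem uminus_mem by fastforce

lemma of_nat_mem: "of_nat n \<in> R"
  by (induction n) (simp_all add: zero_mem one_mem add_mem)

lemma O_span_scale:
  assumes "a \<in> R" and "x \<in> O_span scale R X"
  shows "scale a x \<in> O_span scale R X"
  using assms(2)
proof (induction x rule: O_span.induct)
  case (smul b x)
  then show ?case by (metis O_span.smul assms(1) mult_mem scale_scale)
qed (auto simp: O_span.zero O_span.add scale_right_distrib)

lemma O_span_sum:
  "finite A \<Longrightarrow> (\<And>i. i \<in> A \<Longrightarrow> f i \<in> O_span scale R X) \<Longrightarrow> sum f A \<in> O_span scale R X"
  by (induction A rule: finite_induct) (auto intro: O_span.zero O_span.add)

lemma O_span_hom_image:
  assumes "module_hom scale scale f" and "f ` X \<subseteq> O_span scale R Y" and "x \<in> O_span scale R X"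
  shows "f x \<in> O_span scale R Y"
  using assms(3)
proof (induction x rule: O_span.induct)
  case zero
  show ?case using module_hom.zero[OF assms(1)] by (simp add: O_span.zero)
next
  case (smul a x)
  then show ?case using assms(1,2) by (auto simp: module_hom.scale intro: O_span_scale)
next
  case (add x y)
  then show ?case using assms(1) by (simp add: module_hom.add O_span.add)
qed

lemma O_span_subset: "X \<subseteq> O_span scale R Y \<Longrightarrow> O_span scale R X \<subseteq> O_span scale R Y"
  using O_span_hom_image[OF module_hom_ident] by auto

lemma O_span_finite_range:
  fixes g :: "'i::finite \<Rightarrow> 'b"
  shows "O_span scale R (range g) = {\<Sum>i\<in>UNIV. scale (c i) (g i) | c. \<forall>i. c i \<in> R}"
proof (intro antisym subsetI)
  fix x assume "x \<in> O_span scale R (range g)"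
  then show "x \<in> {\<Sum>i\<in>UNIV. scale (c i) (g i) | c. \<forall>i. c i \<in> R}"
  proof (induction x rule: O_span.induct)
    case zero
    show ?case by (intro CollectI exI[of _ "\<lambda>_. 0"]) (simp add: zero_mem)
  next
    case (smul a x)
    then obtain j where "x = g j" by blast
    have "(\<Sum>i\<in>UNIV. scale (if i = j then a else 0) (g i)) = scale a (g j)"
      by (simp add: if_distrib[where f = "\<lambda>c. scale c _"] cong: if_cong)
    then show ?case using \<open>a \<in> R\<close> \<open>x = g j\<close>
      by (intro CollectI exI[of _ "\<lambda>i. if i = j then a else 0"]) (auto simp: zero_mem)
  next
    case (add x y)
    then obtain c d where "x = (\<Sum>i\<in>UNIV. scale (c i) (g i))" "\<forall>i. c i \<in> R"
      and "y = (\<Sum>i\<in>UNIV. scale (d i) (g i))" "\<forall>i. d i \<in> R" by blast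
    then show ?case
      by (intro CollectI exI[of _ "\<lambda>i. c i + d i"]) (simp add: add_mem scale_left_distrib sum.distrib)
  qed
next
  fix x assume "x \<in> {\<Sum>i\<in>UNIV. scale (c i) (g i) | c. \<forall>i. c i \<in> R}"
  then show "x \<in> O_span scale R (range g)"
    by (auto intro!: O_span_sum O_span.smul)
qed

end

lemma (in vector_space) hSinv_inverse:
  assumes "module_hom scale scale S" and "q \<noteq> 0"
    and quadratic: "\<And>x. S (S x) = scale (q - 1) (S x) + scale q x"
  shows "S (hSinv scale q S x) = x" and "hSinv scale q S (S x) = x"
proof -
  interpret S: module_hom scale scale S by fact
  show "S (hSinv scale q S x) = x" and "hSinv scale q S (S x) = x"
    by (simp_all add: hSinv_def S.diff S.scale quadratic scale_scale \<open>q \<noteq> 0\<close>)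
qed

lemma (in vector_space) unique_coordinates_nonzero:
  fixes g :: "'i::finite \<Rightarrow> 'b"
  assumes "\<forall>x. \<exists>!c. x = (\<Sum>i\<in>UNIV. scale (c i) (g i))"
  shows "g j \<noteq> 0"
proof
  assume "g j = 0"
  obtain c0 where c0: "\<And>c. 0 = (\<Sum>i\<in>UNIV. scale (c i) (g i)) \<Longrightarrow> c = c0"
    using assms by (meson ex1E)
  have "0 = (\<Sum>i\<in>UNIV. scale (if i = j then 1 else 0) (g i))"
    using \<open>g j = 0\<close> by (simp add: if_distrib[where f = "\<lambda>c. scale c _"] cong: if_cong)
  then have "c0 j = 1"
    using c0 by force
  moreover have "c0 j = 0"
    using c0[of "\<lambda>_. 0"] by force
  ultimately show False
    by simp
qed

lemma subring_module_ring_of_integers: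
  fixes v :: "'e::field_char_0 \<Rightarrow> int"
  assumes E: "p_adic_local_field v p" and "module scale"
  shows "subring_module scale (ring_of_integers v)"
proof -
  have v_mult: "v (x * y) = v x + v y" if "x \<noteq> 0" "y \<noteq> 0" for x y
    using E that by (simp add: p_adic_local_field_def)
  have v_add: "v (x + y) \<ge> min (v x) (v y)" if "x \<noteq> 0" "y \<noteq> 0" "x + y \<noteq> 0" for x y
    using E that by (simp add: p_adic_local_field_def)
  have v_one: "v 1 = 0"
    using v_mult[of 1 1] by simp
  have "v (-1) = 0"
    using v_mult[of "-1" "-1"] v_one by simp
  then have v_uminus: "v (- x) = v x" if "x \<noteq> 0" for x
    using v_mult[of "-1" x] that by simp
  show ?thesis
  proof (rule subring_module.intro[OF assms(2)], unfold_locales)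
    show "1 \<in> ring_of_integers v"
      using v_one by (simp add: ring_of_integers_def)
  next
    fix a b assume "a \<in> ring_of_integers v" "b \<in> ring_of_integers v"
    then show "a + b \<in> ring_of_integers v" and "a * b \<in> ring_of_integers v"
      using v_add[of a b] v_mult[of a b] by (fastforce simp: ring_of_integers_def)+
  next
    fix a assume "a \<in> ring_of_integers v"
    then show "- a \<in> ring_of_integers v"
      by (cases "a = 0") (simp_all add: ring_of_integers_def v_uminus)
  qed
qed

fun s1_mult :: "s3 \<Rightarrow> s3" where
  "s1_mult W1 = Ws1"
| "s1_mult Ws1 = W1"
| "s1_mult Ws2 = Ws1s2"
| "s1_mult Ws1s2 = Ws2"
| "s1_mult Ws2s1 = Ws1s2s1"
| "s1_mult Ws1s2s1 = Ws2s1"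

definition s1_descent :: "s3 \<Rightarrow> bool" where
  "s1_descent w \<longleftrightarrow> w \<in> {Ws1, Ws1s2, Ws1s2s1}"

fun t_shift :: "s3 \<Rightarrow> s3" where
  "t_shift W1 = Ws2s1"
| "t_shift Ws2s1 = Ws1s2"
| "t_shift Ws1s2 = W1"
| "t_shift Ws1 = Ws2"
| "t_shift Ws2 = Ws1s2s1"
| "t_shift Ws1s2s1 = Ws1"

lemma t_shift_cube: "t_shift (t_shift (t_shift w)) = w"
  by (cases w) simp_all

locale hecke_eigenvector =
  fixes scale :: "'e::field \<Rightarrow> 'm::ab_group_add \<Rightarrow> 'm"
    and q :: 'e and S1 T Ti :: "'m \<Rightarrow> 'm" and \<Phi> :: 'm and y1 y2 y3 :: 'e
  assumes hecke: "hecke_module scale q S1 T Ti"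
    and q_nonzero: "q \<noteq> 0"
    and Phi_nonzero: "\<Phi> \<noteq> 0"
    and Y1: "hY1 scale q S1 T Ti \<Phi> = scale y1 \<Phi>"
    and Y2: "hY2 scale q S1 T Ti \<Phi> = scale y2 \<Phi>"
    and Y3: "hY3 scale q S1 T Ti \<Phi> = scale y3 \<Phi>"
begin

abbreviation "S2 \<equiv> hS2 S1 T Ti"
abbreviation "TwPhi w \<equiv> hTw S1 T Ti w \<Phi>"

sublocale vector_space scale
  using hecke by (simp add: hecke_module_def)

sublocale S1: module_hom scale scale S1
  using hecke by (simp add: hecke_module_def)

sublocale T: module_hom scale scale T
  using hecke by (simp add: hecke_module_def)

sublocale Ti: module_hom scale scale Ti
  using hecke by (simp add: hecke_module_def)

lemma T_Ti: "T (Ti x) = x" and Ti_T: "Ti (T x) = x"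
  and S1_quadratic: "S1 (S1 x) = scale (q - 1) (S1 x) + scale q x"
  and braid: "S1 (S2 (S1 x)) = S2 (S1 (S2 x))"
  using hecke by (simp_all add: hecke_module_def)

sublocale S2: module_hom scale scale S2
  by unfold_locales (simp_all add: hS2_def S1.add S1.scale T.add T.scale Ti.add Ti.scale)

lemma S2_quadratic: "S2 (S2 x) = scale (q - 1) (S2 x) + scale q x"
  by (simp add: hS2_def T_Ti S1_quadratic Ti.add Ti.scale Ti_T)

lemma T_S2: "T (S2 x) = S1 (T x)"
  by (simp add: hS2_def T_Ti)

lemmas S1_hSinv = hSinv_inverse[OF S1.module_hom_axioms q_nonzero S1_quadratic]
lemmas S2_hSinv = hSinv_inverse[OF S2.module_hom_axioms q_nonzero S2_quadratic]

lemma inj_T: "inj T" and inj_S1: "inj S1" and inj_S2: "inj S2"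
  by (metis injI Ti_T, metis injI S1_hSinv(2), metis injI S2_hSinv(2))

lemma T_Phi: "T \<Phi> = scale (y1 / q) (S2 (S1 \<Phi>))"
proof -
  have "scale q (T \<Phi>) = S2 (S1 (hY1 scale q S1 T Ti \<Phi>))"
    by (simp add: hY1_def S1.scale S2.scale S1_hSinv S2_hSinv)
  also have "\<dots> = scale y1 (S2 (S1 \<Phi>))"
    by (simp add: Y1 S1.scale S2.scale)
  finally have "scale (inverse q) (scale q (T \<Phi>)) = scale (inverse q) (scale y1 (S2 (S1 \<Phi>)))"
    by (rule arg_cong)
  then show ?thesis
    by (simp add: scale_scale q_nonzero divide_inverse mult.commute)
qed

lemma T_S1_Phi: "T (S1 \<Phi>) = scale y2 (S2 \<Phi>)"
proof -
  have "T (S1 \<Phi>) = S2 (hY2 scale q S1 T Ti \<Phi>)"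
    by (simp add: hY2_def S2_hSinv)
  then show ?thesis by (simp add: Y2 S2.scale)
qed

lemma T_S1_S2_Phi: "T (S1 (S2 \<Phi>)) = scale (q * y3) \<Phi>"
proof -
  have "T (S1 (S2 \<Phi>)) = scale q (hY3 scale q S1 T Ti \<Phi>)"
    by (simp add: hY3_def scale_scale q_nonzero)
  then show ?thesis by (simp add: Y3 scale_scale)
qed

lemma S1_TwPhi:
  "S1 (TwPhi w) = (if s1_descent w then scale (q - 1) (TwPhi w) + scale q (TwPhi (s1_mult w))
                   else TwPhi (s1_mult w))"
  by (cases w) (simp_all add: s1_descent_def S1_quadratic)

definition t_coeff :: "s3 \<Rightarrow> 'e" where
  "t_coeff w = (case w of W1 \<Rightarrow> y1 / q | Ws2s1 \<Rightarrow> y2 | Ws1s2 \<Rightarrow> q * y3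
                        | Ws1 \<Rightarrow> y2 | Ws2 \<Rightarrow> y1 / q | Ws1s2s1 \<Rightarrow> q * y3)"

lemma T_TwPhi: "T (TwPhi w) = scale (t_coeff w) (TwPhi (t_shift w))"
  by (cases w) (simp_all add: t_coeff_def T_Phi T_S1_Phi T_S1_S2_Phi T_S2 S1.scale braid)

lemma y_nonzero: "y1 \<noteq> 0" "y2 \<noteq> 0" "y3 \<noteq> 0"
proof -
  have "T \<Phi> \<noteq> 0" "T (S1 \<Phi>) \<noteq> 0" "T (S1 (S2 \<Phi>)) \<noteq> 0"
    using Phi_nonzero inj_T inj_S1 inj_S2 by (metis T.zero S1.zero S2.zero injD)+
  then show "y1 \<noteq> 0" "y2 \<noteq> 0" "y3 \<noteq> 0"
    by (auto simp: T_Phi T_S1_Phi T_S1_S2_Phi)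
qed

end

locale ordinary_eigenvector =
  hecke_eigenvector scale q S1 T Ti \<Phi> y1 y2 y3 + subring_module scale OE
  for scale :: "'e::field \<Rightarrow> 'm::ab_group_add \<Rightarrow> 'm" and q S1 T Ti \<Phi> y1 y2 y3 and OE +
  fixes b :: bool
  assumes q_integral: "q \<in> OE"
    and ordinary: "ordinary OE q y1 y2 y3"
    and choice: "(b \<longrightarrow> inverse y2 \<in> OE) \<and> (\<not> b \<longrightarrow> y2 \<in> OE)"
begin

abbreviation "Q w \<equiv> qwy b q y1 y2 w"
abbreviation "L \<equiv> L_lattice scale OE b q y1 y2 S1 T Ti \<Phi>"
abbreviation "HO \<equiv> HO_Phi scale OE S1 T Ti \<Phi>"

definition lattice_gen :: "s3 \<Rightarrow> 'm" where
  "lattice_gen w = scale (Q w) (TwPhi w)"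

lemma L_eq_O_span: "L = O_span scale OE (range lattice_gen)"
  by (simp add: L_lattice_def O_span_finite_range lattice_gen_def scale_scale)

lemma Q_nonzero: "Q w \<noteq> 0"
  by (cases w; cases b) (simp_all add: q_nonzero y_nonzero)

definition T_unit :: "s3 \<Rightarrow> 'e" where
  "T_unit w = (if w \<in> {Ws1s2, Ws1s2s1} then y1 * y2 * y3 else 1)"

lemma T_lattice_gen: "T (lattice_gen w) = scale (T_unit w) (lattice_gen (t_shift w))"
proof -
  have "Q w * t_coeff w = T_unit w * Q (t_shift w)"
    by (cases w; cases b) (simp_all add: T_unit_def t_coeff_def field_simps q_nonzero y_nonzero)
  then show ?thesis by (simp add: lattice_gen_def T.scale T_TwPhi scale_scale)
qed

lemma T_unit_invertible: "T_unit w \<in> OE" "inverse (T_unit w) \<in> OE" "T_unit w \<noteq> 0"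
  using ordinary y_nonzero by (auto simp: T_unit_def ordinary_def one_mem)

definition s1_ratio :: "s3 \<Rightarrow> 'e" where
  "s1_ratio w = (if s1_descent w then q else 1) * Q w / Q (s1_mult w)"

lemma S1_lattice_gen:
  "S1 (lattice_gen w) =
     (if s1_descent w then scale (q - 1) (lattice_gen w) + scale (s1_ratio w) (lattice_gen (s1_mult w))
      else scale (s1_ratio w) (lattice_gen (s1_mult w)))"
  using Q_nonzero[of "s1_mult w"]
  by (simp add: lattice_gen_def S1.scale S1_TwPhi s1_ratio_def scale_scale scale_right_distrib mult.commute)

lemma s1_ratio_integral: "s1_ratio w \<in> OE"
proof (cases b)
  case True
  then have "s1_ratio w \<in> {1, q, q * inverse y1, y1, inverse y2, q * y2}"
    unfolding s1_ratio_def by (cases w) (simp_all add: s1_descent_def field_simps q_nonzero y_nonzero)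
  then show ?thesis
    using True choice ordinary q_integral by (auto simp: ordinary_def one_mem)
next
  case False
  then have "s1_ratio w \<in> {y2, q * inverse (y1 * y2), 1, q * inverse y2, y1 * y2, q}"
    unfolding s1_ratio_def by (cases w) (simp_all add: s1_descent_def field_simps q_nonzero y_nonzero)
  then show ?thesis
    using False choice ordinary q_integral by (auto simp: ordinary_def one_mem mult_mem)
qed

lemma lattice_gen_t_shift: "lattice_gen (t_shift w) = scale (inverse (T_unit w)) (T (lattice_gen w))"
  using T_unit_invertible(3) by (simp add: T_lattice_gen scale_scale)

lemma Ti_lattice_gen: "Ti (lattice_gen (t_shift w)) = scale (inverse (T_unit w)) (lattice_gen w)"
  by (simp add: lattice_gen_t_shift Ti.scale Ti_T)

lemma lattice_gen_W1: "lattice_gen W1 = \<Phi>"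
  by (simp add: lattice_gen_def)

lemma L_stable:
  assumes "x \<in> L"
  shows "S1 x \<in> L" and "T x \<in> L" and "Ti x \<in> L"
proof -
  have x: "x \<in> O_span scale OE (range lattice_gen)"
    using assms by (simp add: L_eq_O_span)
  have "q - 1 \<in> OE"
    by (simp add: diff_mem q_integral one_mem)
  then have "S1 ` range lattice_gen \<subseteq> O_span scale OE (range lattice_gen)"
    using s1_ratio_integral by (auto simp: S1_lattice_gen intro!: O_span.add O_span.smul)
  then show "S1 x \<in> L"
    using O_span_hom_image[OF S1.module_hom_axioms _ x] by (simp add: L_eq_O_span)
  have "T ` range lattice_gen \<subseteq> O_span scale OE (range lattice_gen)"
    using T_unit_invertible by (auto simp: T_lattice_gen intro!: O_span.smul)
  then show "T x \<in> L"
    using O_span_hom_image[OF T.module_hom_axioms _ x] by (simp add: L_eq_O_span)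
  have "Ti (lattice_gen w) \<in> O_span scale OE (range lattice_gen)" for w
    using Ti_lattice_gen[of "t_shift (t_shift w)"] T_unit_invertible
    by (auto simp: t_shift_cube intro!: O_span.smul)
  then show "Ti x \<in> L"
    using O_span_hom_image[OF Ti.module_hom_axioms _ x] by (auto simp: L_eq_O_span)
qed

lemma orbit_subset_L: "orbit_vecs S1 T Ti \<Phi> \<subseteq> L"
proof
  fix x assume "x \<in> orbit_vecs S1 T Ti \<Phi>"
  then show "x \<in> L"
  proof (induction x rule: orbit_vecs.induct)
    case base
    have "scale 1 (lattice_gen W1) \<in> L"
      unfolding L_eq_O_span by (rule O_span.smul[OF one_mem rangeI])
    then show ?case by (simp add: lattice_gen_W1)
  next
    case (stepS x)
    then show ?case using L_stable(1) by blast
  next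
    case (stepT x)
    then show ?case using L_stable(2) by blast
  next
    case (stepTi x)
    then show ?case using L_stable(3) by blast
  qed
qed

lemma orbit_subset_HO: "orbit_vecs S1 T Ti \<Phi> \<subseteq> HO"
proof
  fix x assume "x \<in> orbit_vecs S1 T Ti \<Phi>"
  then have "scale 1 x \<in> HO"
    unfolding HO_Phi_def by (rule O_span.smul[OF one_mem])
  then show "x \<in> HO" by (simp only: scale_one)
qed

lemma HO_stable:
  assumes "x \<in> HO"
  shows "S1 x \<in> HO" and "T x \<in> HO"
proof -
  have S1_orbit: "S1 ` orbit_vecs S1 T Ti \<Phi> \<subseteq> HO"
    by (intro image_subsetI subsetD[OF orbit_subset_HO orbit_vecs.stepS])
  have T_orbit: "T ` orbit_vecs S1 T Ti \<Phi> \<subseteq> HO"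
    by (intro image_subsetI subsetD[OF orbit_subset_HO orbit_vecs.stepT])
  show "S1 x \<in> HO"
    using O_span_hom_image[OF S1.module_hom_axioms S1_orbit[unfolded HO_Phi_def] assms[unfolded HO_Phi_def]]
    unfolding HO_Phi_def .
  show "T x \<in> HO"
    using O_span_hom_image[OF T.module_hom_axioms T_orbit[unfolded HO_Phi_def] assms[unfolded HO_Phi_def]]
    unfolding HO_Phi_def .
qed

lemma lattice_gen_in_HO: "lattice_gen w \<in> HO"
proof -
  have shift: "lattice_gen (t_shift u) \<in> HO" if "lattice_gen u \<in> HO" for u
  proof -
    have "scale (inverse (T_unit u)) (T (lattice_gen u)) \<in> HO"
      using HO_stable(2)[OF that] unfolding HO_Phi_def by (rule O_span_scale[OF T_unit_invertible(2)])
    then show ?thesis by (simp only: lattice_gen_t_shift)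
  qed
  have W1: "lattice_gen W1 \<in> HO"
    using orbit_subset_HO orbit_vecs.base unfolding lattice_gen_W1 by (rule subsetD)
  have Ws1: "lattice_gen Ws1 \<in> HO"
    \<comment> \<open>q(s1,y) = 1 on one branch and q(s1s2s1,y) = q(s2s1,y) on the other, so S1 hits a generator\<close>
  proof (cases b)
    case True
    have "S1 (lattice_gen W1) = lattice_gen Ws1" unfolding lattice_gen_def using True by simp
    with HO_stable(1)[OF W1] show ?thesis by (simp only:)
  next
    case False
    have "S1 (lattice_gen Ws2s1) = lattice_gen Ws1s2s1"
      unfolding lattice_gen_def using False by (simp add: S1.scale)
    with HO_stable(1)[OF shift[OF W1]] have "lattice_gen Ws1s2s1 \<in> HO" by (simp only: t_shift.simps)
    from shift[OF this] show ?thesis by (simp only: t_shift.simps)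
  qed
  show ?thesis
    using W1 Ws1 shift[OF W1] shift[OF shift[OF W1]] shift[OF Ws1] shift[OF shift[OF Ws1]]
    by (cases w) (simp_all only: t_shift.simps)
qed

theorem L_eq_HO_Phi_and_stable: "L = HO \<and> (\<forall>x\<in>L. S1 x \<in> L \<and> T x \<in> L \<and> Ti x \<in> L)"
proof -
  have "range lattice_gen \<subseteq> HO"
    by (rule image_subsetI) (rule lattice_gen_in_HO)
  then have "L \<subseteq> HO"
    unfolding L_eq_O_span HO_Phi_def by (rule O_span_subset)
  moreover have "HO \<subseteq> L"
    using orbit_subset_L unfolding L_eq_O_span HO_Phi_def by (rule O_span_subset)
  ultimately show ?thesis
    using L_stable by blast
qed

end

theorem proposition3:
  fixes v :: "'e::field_char_0 \<Rightarrow> int" and p f :: nat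
    and scale :: "'e \<Rightarrow> 'm::ab_group_add \<Rightarrow> 'm"
    and S1 T Ti :: "'m \<Rightarrow> 'm" and \<Phi> :: 'm
    and y1 y2 y3 :: 'e and b :: bool
  defines "OE \<equiv> ring_of_integers v"
    and "qE \<equiv> (of_nat (p ^ f) :: 'e)"
  assumes E: "p_adic_local_field v p"
    and f: "f \<ge> 1"
    and H: "hecke_module scale qE S1 T Ti"
    and Y1: "hY1 scale qE S1 T Ti \<Phi> = scale y1 \<Phi>"
    and Y2: "hY2 scale qE S1 T Ti \<Phi> = scale y2 \<Phi>"
    and Y3: "hY3 scale qE S1 T Ti \<Phi> = scale y3 \<Phi>"
    and basis: "\<forall>x. \<exists>!c. x = (\<Sum>w\<in>UNIV. scale (c w) (hTw S1 T Ti w \<Phi>))"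
    and ord: "ordinary OE qE y1 y2 y3"
    and choice: "(b \<longrightarrow> inverse y2 \<in> OE) \<and> (\<not> b \<longrightarrow> y2 \<in> OE)"
  shows "L_lattice scale OE b qE y1 y2 S1 T Ti \<Phi> = HO_Phi scale OE S1 T Ti \<Phi>
       \<and> (\<forall>x \<in> L_lattice scale OE b qE y1 y2 S1 T Ti \<Phi>.
            S1 x \<in> L_lattice scale OE b qE y1 y2 S1 T Ti \<Phi> \<and>
            T x \<in> L_lattice scale OE b qE y1 y2 S1 T Ti \<Phi> \<and>
            Ti x \<in> L_lattice scale OE b qE y1 y2 S1 T Ti \<Phi>)"
proof -
  have vs: "vector_space scale"
    using H by (simp add: hecke_module_def)
  have "\<Phi> \<noteq> 0"
    using vector_space.unique_coordinates_nonzero[OF vs basis, of W1] by simp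
  moreover have "qE \<noteq> 0"
    using E by (simp add: qE_def p_adic_local_field_def prime_gt_0_nat)
  ultimately interpret hecke_eigenvector scale qE S1 T Ti \<Phi> y1 y2 y3
    using H Y1 Y2 Y3 by unfold_locales
  interpret subring_module scale OE
    unfolding OE_def using E module_axioms by (rule subring_module_ring_of_integers)
  have "qE \<in> OE"
    unfolding qE_def by (rule of_nat_mem)
  interpret ordinary_eigenvector scale qE S1 T Ti \<Phi> y1 y2 y3 OE b
    using \<open>qE \<in> OE\<close> ord choice by unfold_locales
  show ?thesis
    by (rule L_eq_HO_Phi_and_stable)
qed

end
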